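(* Fix $h\in\{2,\dots,H\}$. If $x_1,x_2\in\mathcal{X}_{h-1}$ are kinematically inseparable, then $f^\star(x_1,a,x')=f^\star(x_2,a,x')$ for all $x'\in\mathcal{X}_h$ and $a\in\mathcal{A}$. Analogously, if $x_1',x_2'\in\mathcal{X}_h$ are kinematically inseparable, then $f^\star(x,a,x_1')=f^\star(x,a,x_2')$ for all $x\in\mathcal{X}_{h-1}$ and $a\in\mathcal{A}$.
   Context: Block MDP: horizon $H$; finite latent states $\mathcal{S}=\sqcup_h\mathcal{S}_h$; countable observations $\mathcal{X}=\sqcup_h\mathcal{X}_h$; finite actions $\mathcal{A}$; start distribution $\mu$; transitions $T(\cdot\mid s,a)\in\Delta(\mathcal{S}_{h+1})$; emissions $q(\cdot\mid s)\in\Delta(\mathcal{X}_h)$ with disjoint supports, decoder $g^\star$; observation transitions $T(x'\mid x,a)=q(x'\mid g^\star(x'))T(g^\star(x')\mid g^\star(x),a)$. $\Psi_{h-1}$ is a finite set of policies forming an $\alpha$-policy cover of $\mathcal{S}_{h-1}$. $\rho_h\in\Delta(\mathcal{X}_h)$ is the law of $x_h$ when a policy chosen uniformly from $\Psi_{h-1}$ is followed to $x_{h-1}$ and then a uniformly random action is taken; $f^\star(x,a,x')=\frac{T(x'\mid x,a)}{T(x'\mid x,a)+\rho_h(x')}$ (equivalently $\frac{T(g^\star(x')\mid g^\star(x),a)}{T(g^\star(x')\mid g^\star(x),a)+\rho_h(g^\star(x'))}$), the Bayes optimal predictor for distinguishing real from imposter transitions. KI: for full-support $u\in\Delta(\mathcal{X}\times\mathcal{A})$,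 $\mathbb{P}_u(x,a\mid x')=\frac{T(x'\mid x,a)u(x,a)}{\sum_{\tilde x,\tilde a}T(x'\mid\tilde x,\tilde a)u(\tilde x,\tilde a)}$; $x_1',x_2'$ are backward KI if $\mathbb{P}_u(\cdot\mid x_1')=\mathbb{P}_u(\cdot\mid x_2')$ for every such $u$; $x_1,x_2$ are forward KI if $T(\cdot\mid x_1,a)=T(\cdot\mid x_2,a)$ for all $a$; kinematically inseparable means both. *)

theory Defs
  imports "HOL-Probability.Probability"
begin

text \<open>The layer of an observation x is lvl (g x), where g is the decoder.\<close>

definition block_mdp ::
  "nat \<Rightarrow> ('s::finite \<Rightarrow> nat) \<Rightarrow> 's pmf \<Rightarrow> ('s \<Rightarrow> 'a::finite \<Rightarrow> 's pmf)
   \<Rightarrow> ('s \<Rightarrow> 'x::countable pmf) \<Rightarrow> ('x \<Rightarrow> 's) \<Rightarrow> bool" where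
  "block_mdp H lvl \<mu> T q g \<longleftrightarrow>
     (\<forall>s. lvl s \<in> {1..H}) \<and>
     set_pmf \<mu> \<subseteq> {s. lvl s = 1} \<and>
     (\<forall>s a. lvl s < H \<longrightarrow> set_pmf (T s a) \<subseteq> {s'. lvl s' = Suc (lvl s)}) \<and>
     (\<forall>s x. x \<in> set_pmf (q s) \<longrightarrow> g x = s) \<and>
     (\<forall>x. x \<in> set_pmf (q (g x)))"

definition obs_T :: "('s \<Rightarrow> 'a \<Rightarrow> 's pmf) \<Rightarrow> ('s \<Rightarrow> 'x pmf) \<Rightarrow> ('x \<Rightarrow> 's)
    \<Rightarrow> 'x \<Rightarrow> 'a \<Rightarrow> 'x \<Rightarrow> real" where
  "obs_T T q g x a x' = pmf (q (g x')) x' * pmf (T (g x) a) (g x')"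

text \<open>Law of the observation x_h when following the (Markov, possibly stochastic)
 policy pi : X -> Delta(A) from the start.\<close>
definition roll :: "'s pmf \<Rightarrow> ('s \<Rightarrow> 'a \<Rightarrow> 's pmf) \<Rightarrow> ('s \<Rightarrow> 'x pmf) \<Rightarrow> ('x \<Rightarrow> 's)
    \<Rightarrow> ('x \<Rightarrow> 'a pmf) \<Rightarrow> nat \<Rightarrow> 'x pmf" where
  "roll \<mu> T q g \<pi> h =
     ((\<lambda>D. bind_pmf D (\<lambda>x. bind_pmf (\<pi> x) (\<lambda>a. bind_pmf (T (g x) a) q))) ^^ (h - 1))
       (bind_pmf \<mu> q)"

definition reach :: "'s pmf \<Rightarrow> ('s \<Rightarrow> 'a \<Rightarrow> 's pmf) \<Rightarrow> ('s \<Rightarrow> 'x pmf) \<Rightarrow> ('x \<Rightarrow> 's)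
    \<Rightarrow> ('x \<Rightarrow> 'a pmf) \<Rightarrow> nat \<Rightarrow> 's \<Rightarrow> real" where
  "reach \<mu> T q g \<pi> h s = measure_pmf.prob (roll \<mu> T q g \<pi> h) {x. g x = s}"

definition policy_cover :: "('s \<Rightarrow> nat) \<Rightarrow> 's pmf \<Rightarrow> ('s \<Rightarrow> 'a \<Rightarrow> 's pmf) \<Rightarrow> ('s \<Rightarrow> 'x pmf)
    \<Rightarrow> ('x \<Rightarrow> 's) \<Rightarrow> ('x \<Rightarrow> 'a pmf) set \<Rightarrow> real \<Rightarrow> nat \<Rightarrow> bool" where
  "policy_cover lvl \<mu> T q g \<Psi> \<alpha> h \<longleftrightarrow>
     (\<forall>s. lvl s = h \<longrightarrow>
        (\<exists>\<pi>\<in>\<Psi>. reach \<mu> T q g \<pi> h s \<ge> \<alpha> * (SUP \<pi>'. reach \<mu> T q g \<pi>' h s)))"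

definition rho :: "'s pmf \<Rightarrow> ('s \<Rightarrow> 'a::finite \<Rightarrow> 's pmf) \<Rightarrow> ('s \<Rightarrow> 'x pmf) \<Rightarrow> ('x \<Rightarrow> 's)
    \<Rightarrow> ('x \<Rightarrow> 'a pmf) set \<Rightarrow> nat \<Rightarrow> 'x pmf" where
  "rho \<mu> T q g \<Psi> h =
     bind_pmf (pmf_of_set \<Psi>) (\<lambda>\<pi>. bind_pmf (roll \<mu> T q g \<pi> (h - 1)) (\<lambda>x.
       bind_pmf (pmf_of_set UNIV) (\<lambda>a. bind_pmf (T (g x) a) q)))"

definition f_star :: "'s pmf \<Rightarrow> ('s \<Rightarrow> 'a::finite \<Rightarrow> 's pmf) \<Rightarrow> ('s \<Rightarrow> 'x pmf) \<Rightarrow> ('x \<Rightarrow> 's)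
    \<Rightarrow> ('x \<Rightarrow> 'a pmf) set \<Rightarrow> nat \<Rightarrow> 'x \<Rightarrow> 'a \<Rightarrow> 'x \<Rightarrow> real" where
  "f_star \<mu> T q g \<Psi> h x a x' =
     obs_T T q g x a x' / (obs_T T q g x a x' + pmf (rho \<mu> T q g \<Psi> h) x')"

definition cond_back :: "('s \<Rightarrow> 'a \<Rightarrow> 's pmf) \<Rightarrow> ('s \<Rightarrow> 'x pmf) \<Rightarrow> ('x \<Rightarrow> 's)
    \<Rightarrow> ('x \<times> 'a) pmf \<Rightarrow> 'x \<Rightarrow> 'x \<times> 'a \<Rightarrow> real" where
  "cond_back T q g u x' = (\<lambda>(x, a). obs_T T q g x a x' * pmf u (x, a) /
      measure_pmf.expectation u (\<lambda>(y, b). obs_T T q g y b x'))"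

definition backward_KI :: "('s \<Rightarrow> 'a \<Rightarrow> 's pmf) \<Rightarrow> ('s \<Rightarrow> 'x pmf) \<Rightarrow> ('x \<Rightarrow> 's)
    \<Rightarrow> 'x \<Rightarrow> 'x \<Rightarrow> bool" where
  "backward_KI T q g x1' x2' \<longleftrightarrow>
     (\<forall>u :: ('x \<times> 'a) pmf. set_pmf u = UNIV \<longrightarrow> cond_back T q g u x1' = cond_back T q g u x2')"

definition forward_KI :: "('s \<Rightarrow> 'a \<Rightarrow> 's pmf) \<Rightarrow> ('s \<Rightarrow> 'x pmf) \<Rightarrow> ('x \<Rightarrow> 's)
    \<Rightarrow> 'x \<Rightarrow> 'x \<Rightarrow> bool" where
  "forward_KI T q g x1 x2 \<longleftrightarrow> (\<forall>a x'. obs_T T q g x1 a x' = obs_T T q g x2 a x')"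

definition kin_insep :: "('s \<Rightarrow> 'a \<Rightarrow> 's pmf) \<Rightarrow> ('s \<Rightarrow> 'x pmf) \<Rightarrow> ('x \<Rightarrow> 's)
    \<Rightarrow> 'x \<Rightarrow> 'x \<Rightarrow> bool" where
  "kin_insep T q g x1 x2 \<longleftrightarrow> backward_KI T q g x1 x2 \<and> forward_KI T q g x1 x2"

end

theory Submission
  imports Defs
begin

text \<open>Forward inseparability makes the numerators and the first summand of the denominators
of the two values of f_star coincide, while rho does not depend on the first argument.
Backward inseparability, tested with a single full-support u, forces
T(x1' | \<cdot>, \<cdot>) = c T(x2' | \<cdot>, \<cdot>) for some c > 0; since rho is a mixture of the
kernels T(\<cdot> | x, a), also rho(x1') = c rho(x2'), and c cancels in f_star.\<close>

lemma pmf_full_support_exists: "\<exists>u :: 'a::countable pmf. set_pmf u = UNIV"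
proof -
  have "set_pmf (map_pmf from_nat (geometric_pmf (1/2))) = (UNIV :: 'a set)"
    by (simp add: set_pmf_geometric)
  then show ?thesis by blast
qed

lemma expectation_eq_0_imp_zero_full_support:
  fixes f :: "'a \<Rightarrow> real"
  assumes "set_pmf u = UNIV" "integrable (measure_pmf u) f" "\<And>p. 0 \<le> f p"
    and "measure_pmf.expectation u f = 0"
  shows "f p = 0"
proof -
  have "AE p in measure_pmf u. f p = 0"
    using integral_nonneg_eq_0_iff_AE[OF assms(2)] assms(3,4) by simp
  then show ?thesis using assms(1) by (simp add: AE_measure_pmf_iff)
qed

text \<open>A vanishing normalizer (where x / 0 = 0) forces its weight to vanish identically,
and then, by the hypothesis, so does the other one; c = 1 then works.\<close>
lemma normalized_reweightings_eq_imp_proportional: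
  fixes u :: "'a pmf" and f1 f2 :: "'a \<Rightarrow> real"
  defines "E1 \<equiv> measure_pmf.expectation u f1" and "E2 \<equiv> measure_pmf.expectation u f2"
  assumes u: "set_pmf u = UNIV"
    and int: "integrable (measure_pmf u) f1" "integrable (measure_pmf u) f2"
    and nonneg: "\<And>p. 0 \<le> f1 p" "\<And>p. 0 \<le> f2 p"
    and eq: "\<And>p. f1 p * pmf u p / E1 = f2 p * pmf u p / E2"
  shows "\<exists>c>0. \<forall>p. f1 p = c * f2 p"
proof -
  have ratio: "f1 p / E1 = f2 p / E2" for p
  proof -
    have "pmf u p > 0" using u by (simp add: pmf_positive)
    then show ?thesis using eq[of p] by (simp add: divide_simps split: if_splits)
  qed
  have zero1: "f1 p = 0" if "E1 = 0" for p
    using expectation_eq_0_imp_zero_full_support[OF u int(1) nonneg(1)] that E1_def by simp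
  have zero2: "f2 p = 0" if "E2 = 0" for p
    using expectation_eq_0_imp_zero_full_support[OF u int(2) nonneg(2)] that E2_def by simp
  show ?thesis
  proof (cases "E1 = 0 \<or> E2 = 0")
    case True
    then have "f1 p = 0 \<and> f2 p = 0" for p
      using zero1 zero2 ratio[of p] by auto
    then show ?thesis by (intro exI[of _ 1]) simp
  next
    case False
    have "E1 \<ge> 0" "E2 \<ge> 0"
      unfolding E1_def E2_def using nonneg by (simp_all add: integral_nonneg_AE)
    with False have "E1 / E2 > 0" by simp
    moreover have "f1 p = E1 / E2 * f2 p" for p
      using ratio[of p] False by (simp add: field_simps)
    ultimately show ?thesis by blast
  qed
qed

lemma obs_T_nonneg: "0 \<le> obs_T T q g x a x'"
  by (simp add: obs_T_def)

lemma obs_T_le_1: "obs_T T q g x a x' \<le> 1"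
  by (simp add: obs_T_def mult_le_one pmf_le_1)

lemma backward_KI_imp_obs_T_proportional:
  fixes T :: "'s \<Rightarrow> 'a::countable \<Rightarrow> 's pmf" and q :: "'s \<Rightarrow> 'x::countable pmf"
  assumes "backward_KI T q g x1' x2'"
  shows "\<exists>c>0. \<forall>x a. obs_T T q g x a x1' = c * obs_T T q g x a x2'"
proof -
  let ?f = "\<lambda>x' (x, a). obs_T T q g x a x'"
  obtain u :: "('x \<times> 'a) pmf" where u: "set_pmf u = UNIV"
    using pmf_full_support_exists by blast
  have int: "integrable (measure_pmf u) (?f x')" for x'
    by (rule measure_pmf.integrable_const_bound[where B = 1])
       (auto simp: obs_T_nonneg obs_T_le_1)
  have nonneg: "0 \<le> ?f x' p" for x' p
    by (cases p) (simp add: obs_T_nonneg)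
  have "cond_back T q g u x1' = cond_back T q g u x2'"
    using assms u unfolding backward_KI_def by blast
  then have "?f x1' p * pmf u p / measure_pmf.expectation u (?f x1')
      = ?f x2' p * pmf u p / measure_pmf.expectation u (?f x2')" for p
    by (cases p) (simp add: cond_back_def fun_eq_iff)
  then have "\<exists>c>0. \<forall>p. ?f x1' p = c * ?f x2' p"
    by (rule normalized_reweightings_eq_imp_proportional[OF u int int nonneg nonneg])
  then show ?thesis by auto
qed

lemma pmf_bind_proportional:
  assumes "\<And>y. pmf (K y) x1 = c * pmf (K y) x2"
  shows "pmf (bind_pmf M K) x1 = c * pmf (bind_pmf M K) x2"
  unfolding pmf_bind assms by (rule integral_mult_right_zero)

lemma pmf_bind_emission:
  assumes "\<And>s y. y \<in> set_pmf (q s) \<Longrightarrow> g y = s"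
  shows "pmf (bind_pmf (T (g x) a) q) x' = obs_T T q g x a x'"
proof -
  have "pmf (bind_pmf (T (g x) a) q) x' = (LINT s|measure_pmf (T (g x) a). pmf (q s) x')"
    by (simp add: pmf_bind)
  also have "\<dots> = (\<Sum>s\<in>{g x'}. pmf (T (g x) a) s *\<^sub>R pmf (q s) x')"
    using assms by (intro integral_measure_pmf) (auto simp: set_pmf_eq)
  finally show ?thesis by (simp add: obs_T_def)
qed

lemma rho_proportional:
  assumes "\<And>s y. y \<in> set_pmf (q s) \<Longrightarrow> g y = s"
    and "\<And>x a. obs_T T q g x a x1' = c * obs_T T q g x a x2'"
  shows "pmf (rho \<mu> T q g \<Psi> h) x1' = c * pmf (rho \<mu> T q g \<Psi> h) x2'"
proof -
  have "pmf (bind_pmf (T (g x) a) q) y = obs_T T q g x a y" for x a y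
    using assms(1) by (rule pmf_bind_emission)
  then have kernel: "pmf (bind_pmf (T (g x) a) q) x1' = c * pmf (bind_pmf (T (g x) a) q) x2'"
    for x a
    using assms(2) by simp
  show ?thesis
    unfolding rho_def by (intro kernel pmf_bind_proportional)
qed

theorem mainTheorem11:
  fixes H h :: nat
    and lvl :: "'s::finite \<Rightarrow> nat"
    and \<mu> :: "'s pmf"
    and T :: "'s \<Rightarrow> 'a::finite \<Rightarrow> 's pmf"
    and q :: "'s \<Rightarrow> 'x::countable pmf"
    and g :: "'x \<Rightarrow> 's"
    and \<Psi> :: "('x \<Rightarrow> 'a pmf) set"
    and \<alpha> :: real
  assumes "block_mdp H lvl \<mu> T q g"
    and "h \<in> {2..H}"
    and "finite \<Psi>" and "\<Psi> \<noteq> {}"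
    and "0 < \<alpha>" and "\<alpha> \<le> 1"
    and "policy_cover lvl \<mu> T q g \<Psi> \<alpha> (h - 1)"
  shows "(\<forall>x1 x2. lvl (g x1) = h - 1 \<longrightarrow> lvl (g x2) = h - 1 \<longrightarrow> kin_insep T q g x1 x2 \<longrightarrow>
            (\<forall>x' a. lvl (g x') = h \<longrightarrow>
               f_star \<mu> T q g \<Psi> h x1 a x' = f_star \<mu> T q g \<Psi> h x2 a x'))
       \<and> (\<forall>x1' x2'. lvl (g x1') = h \<longrightarrow> lvl (g x2') = h \<longrightarrow> kin_insep T q g x1' x2' \<longrightarrow>
            (\<forall>x a. lvl (g x) = h - 1 \<longrightarrow>
               f_star \<mu> T q g \<Psi> h x a x1' = f_star \<mu> T q g \<Psi> h x a x2'))"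
proof (intro conjI allI impI)
  fix x1 x2 x' :: 'x and a :: 'a
  assume "kin_insep T q g x1 x2"
  then show "f_star \<mu> T q g \<Psi> h x1 a x' = f_star \<mu> T q g \<Psi> h x2 a x'"
    unfolding kin_insep_def forward_KI_def f_star_def by simp
next
  fix x1' x2' x :: 'x and a :: 'a
  assume "kin_insep T q g x1' x2'"
  then obtain c where "c > 0" and obs: "\<And>x a. obs_T T q g x a x1' = c * obs_T T q g x a x2'"
    unfolding kin_insep_def by (metis backward_KI_imp_obs_T_proportional)
  have "\<And>s y. y \<in> set_pmf (q s) \<Longrightarrow> g y = s"
    using assms(1) unfolding block_mdp_def by blast
  then have "pmf (rho \<mu> T q g \<Psi> h) x1' = c * pmf (rho \<mu> T q g \<Psi> h) x2'"
    using obs by (rule rho_proportional)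
  with \<open>c > 0\<close> show "f_star \<mu> T q g \<Psi> h x a x1' = f_star \<mu> T q g \<Psi> h x a x2'"
    unfolding f_star_def obs by (simp add: distrib_left[symmetric])
qed

end
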